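(* Let $\mathcal A=\{1,\dots,I\}$ with $I\ge1$, let $d_a\ge1$ be integers for $a\in\mathcal A$ and $d_0,d_\infty\ge0$ integers; let $\hat{\mathcal A}$ be $\mathcal A$ together with $0$ if $d_0>0$ and $\infty$ if $d_\infty>0$; let $x_a,s_a$ ($a\in\mathcal A$) be reals with $0<|x_a|<1$, and set $x_0=1$, $s_0=d_0+1$, $x_\infty=-1$, $s_\infty=-(d_\infty+1)$; set $m=\sum_{a\in\hat{\mathcal A}}d_a+1$, $p_c(t)=\prod_{a\in\hat{\mathcal A}}(1+x_at)^{d_a}$ and, for $c\in(-1,1)$, $$\beta_{r,k}(c)=\int_{-1}^1\Big(\sum_{a\in\hat{\mathcal A}}\frac{x_ad_as_a}{1+x_at}\Big)p_c(t)t^r(ct+1)^k\,dt+\big((-1)^r(1-c)^kp_c(-1)+(1+c)^kp_c(1)\big).$$ Then for any integer $l\ge m$, $$\beta_{0,-l}=\frac{\gamma_0(c)+o(1-c)}{(1-c)^{l-d_0}}=\frac{\gamma_\infty(c)+o(1+c)}{(1+c)^{l-d_\infty}},$$ where $\gamma_0$ and $\gamma_\infty$ are smooth functions defined on open neighbourhoods of $c=1$ and $c=-1$ respectively, with $\gamma_0(1)>0$ and $\gamma_\infty(-1)>0$.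
   Context: Here $o(x)$ denotes a function which is smooth in a neighbourhood of $x=0$ and satisfies $o(0)=0$ (different occurrences may denote different such functions); the equalities hold for $c\in(-1,1)$ near $1$, resp. near $-1$. In the paper these quantities arise from admissible data over a local product of nonnegative CSCK metrics, where $s_a$ is the normalized scalar curvature ($\pm g_a$ has scalar curvature $\pm2d_as_a$) and $x_a$ has the sign of $g_a$. *)

theory Defs
  imports "HOL-Analysis.Analysis"
begin

definition smooth_on :: "real set \<Rightarrow> (real \<Rightarrow> real) \<Rightarrow> bool" where
  "smooth_on S f \<longleftrightarrow> (\<exists>D::nat \<Rightarrow> real \<Rightarrow> real. D 0 = f \<and>
      (\<forall>n. \<forall>x\<in>S. (D n has_real_derivative D (Suc n) x) (at x)))"

datatype hidx = Idx nat | Zero | Infty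

definition hatA :: "nat \<Rightarrow> nat \<Rightarrow> nat \<Rightarrow> hidx set" where
  "hatA I d0 dinf = Idx ` {1..I} \<union> (if d0 > 0 then {Zero} else {})
                      \<union> (if dinf > 0 then {Infty} else {})"

fun xh :: "(nat \<Rightarrow> real) \<Rightarrow> hidx \<Rightarrow> real" where
  "xh x (Idx a) = x a" | "xh x Zero = 1" | "xh x Infty = -1"

fun dh :: "(nat \<Rightarrow> nat) \<Rightarrow> nat \<Rightarrow> nat \<Rightarrow> hidx \<Rightarrow> nat" where
  "dh d d0 dinf (Idx a) = d a" | "dh d d0 dinf Zero = d0" | "dh d d0 dinf Infty = dinf"

fun sh :: "(nat \<Rightarrow> real) \<Rightarrow> nat \<Rightarrow> nat \<Rightarrow> hidx \<Rightarrow> real" where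
  "sh s d0 dinf (Idx a) = s a" | "sh s d0 dinf Zero = real d0 + 1"
| "sh s d0 dinf Infty = - (real dinf + 1)"

definition mdim :: "nat \<Rightarrow> (nat \<Rightarrow> nat) \<Rightarrow> nat \<Rightarrow> nat \<Rightarrow> nat" where
  "mdim I d d0 dinf = (\<Sum>a\<in>hatA I d0 dinf. dh d d0 dinf a) + 1"

definition pc :: "nat \<Rightarrow> (nat \<Rightarrow> nat) \<Rightarrow> nat \<Rightarrow> nat \<Rightarrow> (nat \<Rightarrow> real) \<Rightarrow> real \<Rightarrow> real" where
  "pc I d d0 dinf x t = (\<Prod>a\<in>hatA I d0 dinf. (1 + xh x a * t) ^ dh d d0 dinf a)"

definition beta :: "nat \<Rightarrow> (nat \<Rightarrow> nat) \<Rightarrow> nat \<Rightarrow> nat \<Rightarrow> (nat \<Rightarrow> real) \<Rightarrow> (nat \<Rightarrow> real)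
                     \<Rightarrow> nat \<Rightarrow> int \<Rightarrow> real \<Rightarrow> real" where
  "beta I d d0 dinf x s r k c =
     integral {-1..1} (\<lambda>t. (\<Sum>a\<in>hatA I d0 dinf.
          xh x a * real (dh d d0 dinf a) * sh s d0 dinf a / (1 + xh x a * t))
        * pc I d d0 dinf x t * t ^ r * (c * t + 1) powi k)
     + ((-1) ^ r * (1 - c) powi k * pc I d d0 dinf x (-1) + (1 + c) powi k * pc I d d0 dinf x 1)"

end

theory Submission
  imports Defs "HOL-Complex_Analysis.Cauchy_Integral_Formula" "HOL-Computational_Algebra.Polynomial"
begin

(* The integrand of beta_{0,-l} is P(t) (ct+1)^(-l) for a polynomial P of degree at most m - 2
   which, if d_0 > 0, vanishes to order exactly d_0 - 1 at t = -1 with positive cofactor there;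
   moreover p_c(-1) = 0 exactly when d_0 > 0.  Expanding P in powers of 1 + t, each integral of
   (1+t)^j (ct+1)^(-l) is elementary, and after multiplication by (1-c)^(l-d_0) it is a rational
   function of c, regular at c = 1, vanishing there unless j = d_0 - 1, in which case its value is
   the alternating sum  sum_i (j choose i) (-1)^i / (l - d_0 + i) = j! / ((l-d_0) (l-d_0+1) ... (l-1)) > 0.
   So gamma_0 is rational with gamma_0(1) > 0, and the error term can be taken to be zero.
   The expansion at c = -1 follows by the reflection t -> -t, which exchanges 0 and infinity. *)

section \<open>Smooth functions\<close>

lemma has_real_derivative_Re_of_real:
  assumes "(f has_field_derivative f') (at (complex_of_real x))"
  shows "((\<lambda>y. Re (f (of_real y))) has_real_derivative Re f') (at x)"
proof -
  have "((\<lambda>y. f (of_real y)) has_derivative (\<lambda>h. f' * of_real h)) (at x)"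
    using has_derivative_compose[OF bounded_linear_imp_has_derivative[OF bounded_linear_of_real]]
      assms unfolding has_field_derivative_def by blast
  then have "((\<lambda>y. Re (f (of_real y))) has_derivative (\<lambda>h. Re (f' * of_real h))) (at x)"
    by (rule has_derivative_Re)
  then show ?thesis unfolding has_field_derivative_def
    by (rule has_derivative_eq_rhs) (auto simp: fun_eq_iff)
qed

lemma smooth_on_holomorphic_extension:
  assumes hol: "f holomorphic_on S" and S: "open S" and U: "open U"
    and US: "\<And>x. x \<in> U \<Longrightarrow> complex_of_real x \<in> S"
    and ext: "\<And>x. x \<in> U \<Longrightarrow> f (of_real x) = of_real (g x)"
  shows "smooth_on U g"
proof -
  define D where "D n = (if n = 0 then g else (\<lambda>x. Re ((deriv ^^ n) f (of_real x))))" for n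
  have der: "((\<lambda>y. Re ((deriv ^^ n) f (of_real y))) has_real_derivative D (Suc n) x) (at x)"
    if "x \<in> U" for n x
  proof -
    have "(deriv ^^ n) f holomorphic_on S" using hol S by (rule holomorphic_higher_deriv)
    then have "((deriv ^^ n) f has_field_derivative deriv ((deriv ^^ n) f) (of_real x)) (at (of_real x))"
      using holomorphic_derivI[OF _ S US[OF that]] by blast
    from has_real_derivative_Re_of_real[OF this] show ?thesis by (simp add: D_def)
  qed
  have "(D n has_real_derivative D (Suc n) x) (at x)" if x: "x \<in> U" for n x
  proof (cases "n = 0")
    case True
    have "(g has_real_derivative D (Suc 0) x) (at x)"
      using der[OF x, of 0] by (rule has_field_derivative_transform_within_open[OF _ U x]) (simp add: ext)
    then show ?thesis using True by (simp add: D_def)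
  next
    case False
    then show ?thesis using der[OF x, of n] by (simp add: D_def)
  qed
  then show ?thesis unfolding smooth_on_def by (intro exI[of _ D]) (simp add: D_def)
qed

lemma smooth_on_reflect:
  assumes "smooth_on U g"
  shows "smooth_on (uminus ` U) (\<lambda>x. g (- x))"
proof -
  obtain D where D0: "D 0 = g" and D: "\<And>n x. x \<in> U \<Longrightarrow> (D n has_real_derivative D (Suc n) x) (at x)"
    using assms unfolding smooth_on_def by blast
  define E where "E n = (\<lambda>x. (-1)^n * D n (- x))" for n
  have "(E n has_real_derivative E (Suc n) x) (at x)" if "x \<in> uminus ` U" for n x
  proof -
    from that have "- x \<in> U" by auto
    from D[OF this, of n] have "((\<lambda>x. D n (- x)) has_real_derivative D (Suc n) (- x) * (-1)) (at x)"
      by (rule DERIV_chain2[of "D n"]) (auto intro!: derivative_eq_intros)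
    then show ?thesis unfolding E_def by (auto intro!: derivative_eq_intros)
  qed
  then show ?thesis unfolding smooth_on_def by (intro exI[of _ E]) (simp add: E_def D0)
qed

lemma smooth_on_const: "smooth_on U (\<lambda>x. k)"
  unfolding smooth_on_def by (intro exI[of _ "\<lambda>n x. if n = 0 then k else 0"]) auto

section \<open>An elementary integral\<close>

lemma sum_atMost_Suc_choose:
  fixes g :: "nat \<Rightarrow> 'a::comm_semiring_1"
  shows "(\<Sum>k\<le>Suc h. of_nat (Suc h choose k) * g k)
       = (\<Sum>k\<le>h. of_nat (h choose k) * g k) + (\<Sum>k\<le>h. of_nat (h choose k) * g (Suc k))"
proof -
  have "(\<Sum>k\<le>Suc h. of_nat (Suc h choose k) * g k)
      = g 0 + (\<Sum>k\<le>h. of_nat (h choose Suc k) * g (Suc k)) + (\<Sum>k\<le>h. of_nat (h choose k) * g (Suc k))"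
    by (subst sum.atMost_Suc_shift) (simp add: sum.distrib algebra_simps)
  also have "g 0 + (\<Sum>k\<le>h. of_nat (h choose Suc k) * g (Suc k)) = (\<Sum>k\<le>Suc h. of_nat (h choose k) * g k)"
    by (subst sum.atMost_Suc_shift) simp
  also have "\<dots> = (\<Sum>k\<le>h. of_nat (h choose k) * g k)"
    by (simp add: binomial_eq_0)
  finally show ?thesis .
qed

lemma alternating_choose_reciprocal_sum:
  fixes a :: real
  assumes "a > 0"
  shows "(\<Sum>k\<le>h. of_nat (h choose k) * ((-1)^k / (a + of_nat k))) = fact h / pochhammer a (Suc h)"
  using assms
proof (induction h arbitrary: a)
  case 0
  then show ?case by simp
next
  case (Suc h)
  define p where "p = pochhammer (a + 1) h"
  have p: "p > 0" unfolding p_def using Suc.prems by (intro pochhammer_pos) simp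
  have "(\<Sum>k\<le>Suc h. of_nat (Suc h choose k) * ((-1)^k / (a + of_nat k)))
     = (\<Sum>k\<le>h. of_nat (h choose k) * ((-1)^k / (a + of_nat k)))
       - (\<Sum>k\<le>h. of_nat (h choose k) * ((-1)^k / ((a + 1) + of_nat k)))"
    by (subst sum_atMost_Suc_choose) (simp add: sum_negf algebra_simps)
  also have "\<dots> = fact h / pochhammer a (Suc h) - fact h / pochhammer (a + 1) (Suc h)"
    using Suc by simp
  also have "\<dots> = fact (Suc h) / pochhammer a (Suc (Suc h))"
  proof -
    define q where "q = a + 1 + of_nat h"
    have q: "q > 0" using Suc.prems by (simp add: q_def)
    have e1: "pochhammer a (Suc h) = a * p" by (simp add: pochhammer_rec p_def)
    have e2: "pochhammer (a + 1) (Suc h) = q * p" by (simp add: pochhammer_rec' p_def q_def)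
    have e3: "pochhammer a (Suc (Suc h)) = a * (q * p)"
      by (subst pochhammer_rec) (simp add: e2)
    have "fact h / (a * p) - fact h / (q * p) = fact h * (q - a) / (a * (q * p))"
      using p q Suc.prems by (simp add: field_simps)
    also have "fact h * (q - a) = fact (Suc h)" by (simp add: q_def algebra_simps)
    finally show ?thesis unfolding e1 e2 e3 .
  qed
  finally show ?case .
qed

lemma has_integral_binomial_powi:
  fixes c :: real
  assumes c: "0 < c" "c < 1" and jl: "j + 2 \<le> l"
  shows "((\<lambda>t. (1 + t)^j * (c*t + 1) powi (- int l)) has_integral
     (\<Sum>i\<le>j. real (j choose i) * (-(1 - c))^i / (c^(j+1) * real (l-1-j+i))
          * ((1 - c) powi (- int (l-1-j+i)) - (1 + c) powi (- int (l-1-j+i))))) {-1..1}"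
proof -
  define n where "n i = l - 1 - j + i" for i
  define b where "b i = real (j choose i) * (-(1 - c))^i / (c^(j+1) * real (n i))" for i
  (* With u = c t + 1 one has c (1 + t) = u - (1 - c); expand binomially and integrate termwise. *)
  define F where "F t = - (\<Sum>i\<le>j. b i * (c*t + 1) powi (- int (n i)))" for t
  have der: "(F has_real_derivative (1 + t)^j * (c*t + 1) powi (- int l)) (at t)"
    if t: "t \<in> {-1..1}" for t
  proof -
    have "c * t \<ge> c * -1" using t c by (intro mult_left_mono) auto
    then have u: "c*t + 1 \<noteq> 0" using c by auto
    have F': "(F has_real_derivative
        (\<Sum>i\<le>j. real (n i) * (c*t + 1) powi (- int (n i) - 1) * c * b i)) (at t)"
      unfolding F_def using u by (auto intro!: derivative_eq_intros simp: sum_negf)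
    have "(\<Sum>i\<le>j. real (n i) * (c*t + 1) powi (- int (n i) - 1) * c * b i)
        = (\<Sum>i\<le>j. real (j choose i) * (-(1 - c))^i * (c*t + 1)^(j - i))
            * (c*t + 1) powi (- int l) / c^j"
      unfolding sum_distrib_right sum_divide_distrib
    proof (intro sum.cong refl)
      fix i assume "i \<in> {..j}"
      then have exp: "- int (n i) - 1 = int (j - i) + - int l" and "n i \<noteq> 0"
        using jl by (auto simp: n_def)
      have "(c*t + 1) powi (- int (n i) - 1) = (c*t + 1)^(j - i) * (c*t + 1) powi (- int l)"
        unfolding exp using power_int_add[of "c*t + 1" "int (j - i)" "- int l"] u by simp
      then show "real (n i) * (c*t + 1) powi (- int (n i) - 1) * c * b i
          = real (j choose i) * (-(1 - c))^i * (c*t + 1)^(j - i) * (c*t + 1) powi (- int l) / c^j"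
        using \<open>n i \<noteq> 0\<close> c by (simp add: b_def)
    qed
    also have "(\<Sum>i\<le>j. real (j choose i) * (-(1 - c))^i * (c*t + 1)^(j - i)) = (c * (1 + t))^j"
      by (subst binomial_ring[symmetric]) (simp add: algebra_simps)
    also have "(c * (1 + t))^j * (c*t + 1) powi (- int l) / c^j = (1 + t)^j * (c*t + 1) powi (- int l)"
      using c by (simp add: power_mult_distrib)
    finally show ?thesis using F' by (rule DERIV_cong[rotated])
  qed
  have "((\<lambda>t. (1 + t)^j * (c*t + 1) powi (- int l)) has_integral (F 1 - F (-1))) {-1..1}"
    by (intro fundamental_theorem_of_calculus)
      (auto intro!: has_field_derivative_at_within der
        simp: has_real_derivative_iff_has_vector_derivative[symmetric])
  also have "F 1 - F (-1) = (\<Sum>i\<le>j. b i * ((1 - c) powi (- int (n i)) - (1 + c) powi (- int (n i))))"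
    by (simp add: F_def sum_subtractf[symmetric] algebra_simps)
  finally show ?thesis unfolding b_def n_def .
qed

(* (1 - c)^(l - e) times the integral of has_integral_binomial_powi, rearranged so that it is
   visibly holomorphic near c = 1. *)
definition gamma_term :: "nat \<Rightarrow> nat \<Rightarrow> nat \<Rightarrow> 'a::real_normed_field \<Rightarrow> 'a" where
  "gamma_term l e j z = (\<Sum>i\<le>j. of_real (real (j choose i) * (-1)^i / real (l-1-j+i))
      * ((1 - z)^(j+1-e) - (1 - z)^(l-e+i) / (1 + z)^(l-1-j+i)) / z^(j+1))"

lemma gamma_term_holomorphic: "gamma_term l e j holomorphic_on - {0, -1}"
  unfolding gamma_term_def[abs_def] by (intro holomorphic_intros) (auto simp: add_eq_0_iff)

lemma gamma_term_of_real: "gamma_term l e j (of_real c) = of_real (gamma_term l e j c)"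
  unfolding gamma_term_def by simp

lemma has_integral_gamma_term:
  fixes c :: real
  assumes c: "0 < c" "c < 1" and j: "e \<le> j + 1" "j + 2 \<le> l"
  shows "((\<lambda>t. (1 + t)^j * (c*t + 1) powi (- int l)) has_integral
           gamma_term l e j c / (1 - c)^(l-e)) {-1..1}"
proof -
  have eq: "(\<Sum>i\<le>j. real (j choose i) * (-(1 - c))^i / (c^(j+1) * real (l-1-j+i))
          * ((1 - c) powi (- int (l-1-j+i)) - (1 + c) powi (- int (l-1-j+i))))
      = gamma_term l e j c / (1 - c)^(l-e)"
    unfolding gamma_term_def sum_divide_distrib
  proof (intro sum.cong refl)
    fix i assume "i \<in> {..j}"
    define n where "n = l-1-j+i"
    have n: "n \<noteq> 0" "l - e + i = (j + 1 - e) + n" using j by (auto simp: n_def)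
    have cancel: "C * (s * a) / (c' * N) * (X / (b * a) - 1 / Z) = C * s / N * (X - b * a / Z) / c' / b"
      if "a \<noteq> 0" "b \<noteq> 0" "c' \<noteq> 0" "N \<noteq> 0" "Z \<noteq> 0" for C s a b c' N X Z :: real
      using that by (simp add: field_simps)
    have Y: "(1 - c)^(l-e+i) = (1 - c)^(l-e) * (1 - c)^i" by (simp add: power_add)
    have pw: "(1 - c) powi (- int n) = (1 - c)^(j+1-e) / ((1 - c)^(l-e) * (1 - c)^i)"
      using c unfolding Y[symmetric] n(2) by (simp add: power_add power_int_minus_divide)
    have Z: "(1 + c) powi (- int n) = 1 / (1 + c)^n" by (simp add: power_int_minus_divide)
    show "real (j choose i) * (-(1 - c))^i / (c^(j+1) * real n)
          * ((1 - c) powi (- int n) - (1 + c) powi (- int n))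
        = of_real (real (j choose i) * (-1)^i / real n)
          * ((1 - c)^(j+1-e) - (1 - c)^(l-e+i) / (1 + c)^n) / c^(j+1) / (1 - c)^(l-e)"
      unfolding pw Z Y power_minus[of "1 - c"] of_real_eq_id id_apply
      by (rule cancel) (use c n(1) in auto)
  qed
  show ?thesis using has_integral_binomial_powi[OF c j(2)] unfolding eq .
qed

lemma gamma_term_at_1:
  assumes "e \<le> j + 1" "e < l"
  shows "gamma_term l e j (1::real) = (if j + 1 = e then fact j / pochhammer (real (l - e)) e else 0)"
proof (cases "j + 1 = e")
  case True
  have "gamma_term l e j (1::real) = (\<Sum>i\<le>j. of_nat (j choose i) * ((-1)^i / (real (l - e) + of_nat i)))"
    unfolding gamma_term_def using True assms by (intro sum.cong) (auto simp: of_nat_diff power_0_left)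
  also have "\<dots> = fact j / pochhammer (real (l - e)) (Suc j)"
    using assms by (intro alternating_choose_reciprocal_sum) simp
  finally show ?thesis using True by simp
next
  case False
  then show ?thesis unfolding gamma_term_def using assms by (simp add: power_0_left)
qed

(* coeff (pcompose R [:-1, 1:]) k is the coefficient of (1 + t)^k in R. *)
definition gamma_poly :: "real poly \<Rightarrow> nat \<Rightarrow> nat \<Rightarrow> 'a::real_normed_field \<Rightarrow> 'a" where
  "gamma_poly R l e z = (\<Sum>k\<le>degree R. of_real (coeff (pcompose R [:-1, 1:]) k) * gamma_term l e (k + (e - 1)) z)"

lemma gamma_poly_holomorphic: "gamma_poly R l e holomorphic_on - {0, -1}"
  unfolding gamma_poly_def[abs_def]
  by (intro holomorphic_intros holomorphic_on_sum gamma_term_holomorphic)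

lemma gamma_poly_of_real: "gamma_poly R l e (of_real c) = of_real (gamma_poly R l e c)"
  unfolding gamma_poly_def by (simp add: gamma_term_of_real)

lemma has_integral_gamma_poly:
  fixes c :: real
  assumes c: "0 < c" "c < 1" and deg: "degree R + (e - 1) + 2 \<le> l"
  shows "((\<lambda>t. (1 + t)^(e - 1) * poly R t * (c*t + 1) powi (- int l)) has_integral
           gamma_poly R l e c / (1 - c)^(l-e)) {-1..1}"
proof -
  define Q where "Q = pcompose R [:-1, 1:]"
  have "poly R t = poly Q (1 + t)" for t unfolding Q_def by (simp add: poly_pcompose)
  also have "poly Q (1 + t) = (\<Sum>k\<le>degree R. coeff Q k * (1 + t)^k)" for t
    by (simp add: poly_altdef Q_def degree_pcompose)
  finally have "(1 + t)^(e - 1) * poly R t * (c*t + 1) powi (- int l)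
      = (\<Sum>k\<le>degree R. coeff Q k * ((1 + t)^(k + (e - 1)) * (c*t + 1) powi (- int l)))" for t
    by (simp add: sum_distrib_left sum_distrib_right power_add algebra_simps)
  moreover have "((\<lambda>t. \<Sum>k\<le>degree R. coeff Q k * ((1 + t)^(k + (e - 1)) * (c*t + 1) powi (- int l)))
      has_integral (\<Sum>k\<le>degree R. coeff Q k * (gamma_term l e (k + (e - 1)) c / (1 - c)^(l-e)))) {-1..1}"
    using deg by (intro has_integral_sum has_integral_mult_right has_integral_gamma_term c) auto
  ultimately show ?thesis
    by (simp add: gamma_poly_def Q_def sum_divide_distrib)
qed

lemma gamma_poly_at_1:
  assumes "e < l"
  shows "gamma_poly R l e (1::real)
           = (if e = 0 then 0 else poly R (-1) * (fact (e - 1) / pochhammer (real (l - e)) e))"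
proof -
  have k: "k + (e - 1) + 1 = e \<longleftrightarrow> k = 0 \<and> 0 < e" for k by auto
  have "gamma_poly R l e (1::real) = (\<Sum>k\<le>degree R. if k = 0 \<and> 0 < e
      then coeff (pcompose R [:-1, 1:]) 0 * (fact (e - 1) / pochhammer (real (l - e)) e) else 0)"
    unfolding gamma_poly_def using assms by (intro sum.cong) (auto simp: gamma_term_at_1 k)
  also have "coeff (pcompose R [:-1, 1:]) 0 = poly R (-1)"
    by (simp add: poly_0_coeff_0[symmetric] poly_pcompose)
  finally show ?thesis by (simp add: sum.delta)
qed

(* For e = 0 the truncated exponent e - 1 is 0, so there is no factor (1 + t). *)
lemma integral_poly_powi_expansion_at_1:
  fixes R :: "real poly"
  assumes deg: "degree R + (e - 1) + 2 \<le> l" and el: "e < l"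
    and B0: "e = 0 \<Longrightarrow> B > 0" and B1: "0 < e \<Longrightarrow> B = 0 \<and> poly R (-1) > 0"
  shows "\<exists>g U. open U \<and> 1 \<in> U \<and> smooth_on U g \<and> g 1 > 0 \<and> (\<forall>c. 0 < c \<and> c < 1 \<longrightarrow>
     integral {-1..1} (\<lambda>t. (1 + t)^(e - 1) * poly R t * (c*t + 1) powi (- int l))
       + ((1 - c) powi (- int l) * B + (1 + c) powi (- int l) * C) = g c / (1 - c)^(l-e))"
proof -
  define g where "g c = gamma_poly R l e c + B + (1 - c)^(l-e) * C / (1 + c)^l" for c :: real
  have "smooth_on {0<..} g"
  proof (rule smooth_on_holomorphic_extension)
    show "(\<lambda>z. gamma_poly R l e z + of_real B + (1 - z)^(l-e) * of_real C / (1 + z)^l)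
            holomorphic_on - {0, -1 :: complex}"
      by (intro holomorphic_intros gamma_poly_holomorphic) (auto simp: add_eq_0_iff)
  qed (auto simp: g_def gamma_poly_of_real complex_eq_iff)
  moreover have "g 1 > 0"
  proof (cases "e = 0")
    case True
    then show ?thesis using B0 el by (simp add: g_def gamma_poly_at_1 power_0_left)
  next
    case False
    with B1 have "poly R (-1) > 0" by simp
    have "g 1 = poly R (-1) * (fact (e - 1) / pochhammer (real (l - e)) e)"
      using False B1 el by (simp add: g_def gamma_poly_at_1 power_0_left)
    moreover have "fact (e - 1) / pochhammer (real (l - e)) e > (0::real)"
      using el by (intro divide_pos_pos pochhammer_pos) auto
    ultimately show ?thesis using \<open>poly R (-1) > 0\<close> by (simp only:) (rule mult_pos_pos)
  qed
  moreover have "integral {-1..1} (\<lambda>t. (1 + t)^(e - 1) * poly R t * (c*t + 1) powi (- int l))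
       + ((1 - c) powi (- int l) * B + (1 + c) powi (- int l) * C) = g c / (1 - c)^(l-e)"
    if c: "0 < c" "c < 1" for c
  proof -
    have "(1 - c) powi (- int l) * B = B / (1 - c)^(l-e)"
      using c B1 by (cases "e = 0") (simp_all add: power_int_minus_divide)
    moreover have "(1 + c) powi (- int l) * C = ((1 - c)^(l-e) * C / (1 + c)^l) / (1 - c)^(l-e)"
      using c by (simp add: power_int_minus_divide)
    ultimately show ?thesis
      using integral_unique[OF has_integral_gamma_poly[OF c deg]]
      by (simp add: g_def add_divide_distrib)
  qed
  ultimately show ?thesis by (intro exI[of _ g] exI[of _ "{0<..}"]) auto
qed

section \<open>The numerator polynomial\<close>

(* For S = 1 this is the derivative of the product of the (1 + X a t)^(D a). *)
definition weighted_logderiv_poly :: "'i set \<Rightarrow> ('i \<Rightarrow> real) \<Rightarrow> ('i \<Rightarrow> nat) \<Rightarrow> ('i \<Rightarrow> real) \<Rightarrow> real poly" where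
  "weighted_logderiv_poly A X D S =
     (\<Sum>a\<in>A. smult (X a * real (D a) * S a) ([:1, X a:]^(D a - 1) * (\<Prod>b\<in>A-{a}. [:1, X b:]^(D b))))"

lemma poly_weighted_logderiv_poly:
  assumes fin: "finite A" and D: "\<forall>a\<in>A. D a \<ge> 1" and nz: "\<forall>a\<in>A. 1 + X a * t \<noteq> 0"
  shows "poly (weighted_logderiv_poly A X D S) t
       = (\<Sum>a\<in>A. X a * real (D a) * S a / (1 + X a * t)) * (\<Prod>a\<in>A. (1 + X a * t)^(D a))"
  unfolding weighted_logderiv_poly_def poly_sum sum_distrib_right
proof (intro sum.cong refl)
  fix a assume a: "a \<in> A"
  obtain m where m: "D a = Suc m" using D a by (cases "D a") auto
  have u: "1 + X a * t \<noteq> 0" using nz a by auto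
  have "(\<Prod>b\<in>A. (1 + X b * t)^(D b)) = (1 + X a * t)^(D a) * (\<Prod>b\<in>A-{a}. (1 + X b * t)^(D b))"
    using fin a by (simp add: prod.remove)
  then show "poly (smult (X a * real (D a) * S a) ([:1, X a:]^(D a - 1) * (\<Prod>b\<in>A-{a}. [:1, X b:]^(D b)))) t
      = X a * real (D a) * S a / (1 + X a * t) * (\<Prod>b\<in>A. (1 + X b * t)^(D b))"
    using u by (simp add: m poly_prod mult.commute[of t])
qed

lemma degree_weighted_logderiv_poly:
  assumes fin: "finite A" and D: "\<forall>a\<in>A. D a \<ge> 1" and ne: "A \<noteq> {}"
  shows "degree (weighted_logderiv_poly A X D S) < (\<Sum>a\<in>A. D a)"
proof -
  have lin: "degree ([:1, y:]^n) \<le> n" for y :: real and n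
  proof -
    have "degree ([:1, y:]^n) \<le> degree [:1, y:] * n" by (rule degree_power_le)
    also have "\<dots> \<le> n" by (cases "y = 0") auto
    finally show ?thesis .
  qed
  have "degree (weighted_logderiv_poly A X D S) \<le> (\<Sum>a\<in>A. D a) - 1"
    unfolding weighted_logderiv_poly_def
  proof (intro degree_sum_le fin)
    fix a assume a: "a \<in> A"
    have "degree (\<Prod>b\<in>A-{a}. [:1, X b:]^(D b)) \<le> (\<Sum>b\<in>A-{a}. degree ([:1, X b:]^(D b)))"
      using degree_prod_sum_le[of "A-{a}" "\<lambda>b. [:1, X b:]^(D b)"] fin by (simp add: o_def)
    also have "\<dots> \<le> (\<Sum>b\<in>A-{a}. D b)" by (intro sum_mono lin)
    finally have "degree ([:1, X a:]^(D a - 1) * (\<Prod>b\<in>A-{a}. [:1, X b:]^(D b))) \<le> (D a - 1) + (\<Sum>b\<in>A-{a}. D b)"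
      by (intro order.trans[OF degree_mult_le] add_mono lin)
    also have "\<dots> = (\<Sum>a\<in>A. D a) - 1"
      using D a sum.remove[OF fin a, of D] by auto
    finally show "degree (smult (X a * real (D a) * S a) ([:1, X a:]^(D a - 1) * (\<Prod>b\<in>A-{a}. [:1, X b:]^(D b))))
       \<le> (\<Sum>a\<in>A. D a) - 1"
      by (rule order.trans[OF degree_smult_le])
  qed
  moreover obtain a where "a \<in> A" using ne by auto
  then have "(\<Sum>a\<in>A. D a) \<ge> 1" using D fin member_le_sum[of a A D] by fastforce
  ultimately show ?thesis by simp
qed

lemma weighted_logderiv_poly_factor:
  assumes fin: "finite A" and D: "\<forall>a\<in>A. D a \<ge> 1" and z: "z \<in> A"
  obtains R where "weighted_logderiv_poly A X D S = [:1, X z:]^(D z - 1) * R"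
    and "\<And>t. 1 + X z * t = 0 \<Longrightarrow> poly R t = X z * real (D z) * S z * (\<Prod>b\<in>A-{z}. (1 + X b * t)^(D b))"
proof -
  define T where "T a = smult (X a * real (D a) * S a) ([:1, X a:]^(D a - 1) * (\<Prod>b\<in>A-{a}. [:1, X b:]^(D b)))" for a
  define R where "R = smult (X z * real (D z) * S z) (\<Prod>b\<in>A-{z}. [:1, X b:]^(D b))
     + [:1, X z:] * (\<Sum>a\<in>A-{z}. smult (X a * real (D a) * S a) ([:1, X a:]^(D a - 1) * (\<Prod>b\<in>A-{a}-{z}. [:1, X b:]^(D b))))"
  obtain m where m: "D z = Suc m" using D z by (cases "D z") auto
  have "weighted_logderiv_poly A X D S = T z + (\<Sum>a\<in>A-{z}. T a)"
    unfolding weighted_logderiv_poly_def T_def using fin z by (simp add: sum.remove)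
  also have "T z = [:1, X z:]^(D z - 1) * smult (X z * real (D z) * S z) (\<Prod>b\<in>A-{z}. [:1, X b:]^(D b))"
    unfolding T_def by (simp add: mult_smult_right)
  also have "(\<Sum>a\<in>A-{z}. T a) = [:1, X z:]^(D z - 1) * ([:1, X z:] * (\<Sum>a\<in>A-{z}. smult (X a * real (D a) * S a) ([:1, X a:]^(D a - 1) * (\<Prod>b\<in>A-{a}-{z}. [:1, X b:]^(D b)))))"
    unfolding sum_distrib_left
  proof (intro sum.cong refl)
    fix a assume a: "a \<in> A - {z}"
    have "(\<Prod>b\<in>A-{a}. [:1, X b:]^(D b)) = [:1, X z:]^(D z) * (\<Prod>b\<in>A-{a}-{z}. [:1, X b:]^(D b))"
      using fin a z by (subst prod.remove[of _ z]) auto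
    then show "T a = [:1, X z:]^(D z - 1) * ([:1, X z:] * smult (X a * real (D a) * S a) ([:1, X a:]^(D a - 1) * (\<Prod>b\<in>A-{a}-{z}. [:1, X b:]^(D b))))"
      unfolding T_def m by (simp add: mult_smult_right algebra_simps)
  qed
  finally have "weighted_logderiv_poly A X D S = [:1, X z:]^(D z - 1) * R"
    unfolding R_def by (simp add: distrib_left)
  moreover have "poly R t = X z * real (D z) * S z * (\<Prod>b\<in>A-{z}. (1 + X b * t)^(D b))"
    if "1 + X z * t = 0" for t
  proof -
    have lin: "poly [:1, y:] t = 1 + y * t" for y by simp
    show ?thesis unfolding R_def using that
      by (simp only: poly_add poly_smult poly_mult poly_power poly_prod poly_sum lin)
  qed
  ultimately show thesis by (rule that)
qed

lemma weighted_logderiv_poly_root_order: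
  assumes fin: "finite A" and D: "\<forall>a\<in>A. D a \<ge> 1" and z: "z \<in> A"
    and Xz: "X z = 1" and Sz: "S z > 0" and X: "\<forall>b\<in>A-{z}. X b < 1"
  obtains R where "weighted_logderiv_poly A X D S = [:1, 1:]^(D z - 1) * R" and "poly R (-1) > 0"
proof -
  obtain R where R: "weighted_logderiv_poly A X D S = [:1, X z:]^(D z - 1) * R"
    and R1: "\<And>t. 1 + X z * t = 0 \<Longrightarrow> poly R t = X z * real (D z) * S z * (\<Prod>b\<in>A-{z}. (1 + X b * t)^(D b))"
    using weighted_logderiv_poly_factor[OF fin D z] by blast
  have "(\<Prod>b\<in>A-{z}. (1 - X b)^(D b)) > 0" using X by (intro prod_pos) auto
  moreover have "D z > 0" using D z by auto
  ultimately have "poly R (-1) > 0" using R1[of "-1"] Xz Sz by simp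
  with R Xz show thesis by (intro that) simp_all
qed

section \<open>The expansions of beta\<close>

lemma mem_hatA:
  "a \<in> hatA I d0 dinf \<longleftrightarrow> (case a of Idx i \<Rightarrow> i \<in> {1..I} | Zero \<Rightarrow> 0 < d0 | Infty \<Rightarrow> 0 < dinf)"
  unfolding hatA_def by (cases a) auto

lemma finite_hatA: "finite (hatA I d0 dinf)"
  unfolding hatA_def by simp

lemma dh_ge_1:
  assumes "\<forall>i\<in>{1..I}. d i \<ge> 1" and "a \<in> hatA I d0 dinf"
  shows "dh d d0 dinf a \<ge> 1"
  using assms by (cases a) (auto simp: mem_hatA)

lemma abs_xh_le_1:
  assumes "\<forall>i\<in>{1..I}. \<bar>x i\<bar> \<le> 1" and "a \<in> hatA I d0 dinf"
  shows "\<bar>xh x a\<bar> \<le> 1"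
  using assms by (cases a) (auto simp: mem_hatA)

abbreviation beta_numerator :: "nat \<Rightarrow> (nat \<Rightarrow> nat) \<Rightarrow> nat \<Rightarrow> nat \<Rightarrow> (nat \<Rightarrow> real) \<Rightarrow> (nat \<Rightarrow> real) \<Rightarrow> real poly" where
  "beta_numerator I d d0 dinf x s \<equiv> weighted_logderiv_poly (hatA I d0 dinf) (xh x) (dh d d0 dinf) (sh s d0 dinf)"

lemma beta_eq_integral_numerator:
  assumes d: "\<forall>i\<in>{1..I}. d i \<ge> 1" and x: "\<forall>i\<in>{1..I}. \<bar>x i\<bar> \<le> 1"
  shows "beta I d d0 dinf x s r k c =
     integral {-1..1} (\<lambda>t. poly (beta_numerator I d d0 dinf x s) t
                          * t^r * (c*t + 1) powi k)
     + ((-1)^r * (1 - c) powi k * pc I d d0 dinf x (-1) + (1 + c) powi k * pc I d d0 dinf x 1)"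
proof -
  have "integral {-1..1} (\<lambda>t. (\<Sum>a\<in>hatA I d0 dinf. xh x a * real (dh d d0 dinf a) * sh s d0 dinf a / (1 + xh x a * t))
          * pc I d d0 dinf x t * t^r * (c*t + 1) powi k)
      = integral {-1..1} (\<lambda>t. poly (beta_numerator I d d0 dinf x s) t
          * t^r * (c*t + 1) powi k)"
  proof (rule integral_spike[of "{-1, 1}"])
    fix t :: real assume "t \<in> {-1..1} - {-1, 1}"
    then have t: "\<bar>t\<bar> < 1" by auto
    have "1 + xh x a * t \<noteq> 0" if "a \<in> hatA I d0 dinf" for a
    proof -
      have "\<bar>xh x a\<bar> * \<bar>t\<bar> \<le> \<bar>t\<bar>" using abs_xh_le_1[OF x that] by (intro mult_left_le_one_le) auto
      then have "\<bar>xh x a * t\<bar> < 1" using t unfolding abs_mult by linarith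
      then show ?thesis by (auto simp: abs_less_iff)
    qed
    then have "poly (beta_numerator I d d0 dinf x s) t
        = (\<Sum>a\<in>hatA I d0 dinf. xh x a * real (dh d d0 dinf a) * sh s d0 dinf a / (1 + xh x a * t))
          * pc I d d0 dinf x t"
      unfolding pc_def using dh_ge_1[OF d] by (intro poly_weighted_logderiv_poly finite_hatA) auto
    then show "poly (beta_numerator I d d0 dinf x s) t
          * t^r * (c*t + 1) powi k
        = (\<Sum>a\<in>hatA I d0 dinf. xh x a * real (dh d d0 dinf a) * sh s d0 dinf a / (1 + xh x a * t))
          * pc I d d0 dinf x t * t^r * (c*t + 1) powi k"
      by simp
  qed simp
  then show ?thesis unfolding beta_def by simp
qed

(* The reflection t -> -t exchanges the roles of 0 and infinity. *)
fun swap_ends :: "hidx \<Rightarrow> hidx" where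
  "swap_ends (Idx i) = Idx i" | "swap_ends Zero = Infty" | "swap_ends Infty = Zero"

lemma inj_on_swap_ends: "inj_on swap_ends A"
proof (rule inj_onI)
  fix a b assume "swap_ends a = swap_ends b"
  then show "a = b" by (cases a; cases b) auto
qed

lemma swap_ends_hatA: "swap_ends ` hatA I d0 dinf = hatA I dinf d0"
  unfolding hatA_def by (auto simp: image_image)

lemma xh_swap_ends [simp]: "xh (\<lambda>i. - x i) (swap_ends a) = - xh x a"
  by (cases a) auto

lemma dh_swap_ends [simp]: "dh d dinf d0 (swap_ends a) = dh d d0 dinf a"
  by (cases a) auto

lemma sh_swap_ends [simp]: "sh (\<lambda>i. - s i) dinf d0 (swap_ends a) = - sh s d0 dinf a"
  by (cases a) auto

lemma sum_hatA_swap_ends: "(\<Sum>a\<in>hatA I n m. f a) = (\<Sum>a\<in>hatA I m n. f (swap_ends a))"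
  using sum.reindex[OF inj_on_swap_ends, of f "hatA I m n"] by (simp add: swap_ends_hatA o_def)

lemma prod_hatA_swap_ends: "(\<Prod>a\<in>hatA I n m. f a) = (\<Prod>a\<in>hatA I m n. f (swap_ends a))"
  using prod.reindex[OF inj_on_swap_ends, of f "hatA I m n"] by (simp add: swap_ends_hatA o_def)

lemma mdim_swap_ends: "mdim I d dinf d0 = mdim I d d0 dinf"
  unfolding mdim_def by (simp add: sum_hatA_swap_ends[where m = d0 and n = dinf])

lemma pc_reflect: "pc I d dinf d0 (\<lambda>i. - x i) t = pc I d d0 dinf x (- t)"
  unfolding pc_def by (simp add: prod_hatA_swap_ends[where m = d0 and n = dinf])

lemma beta_reflect:
  "beta I d dinf d0 (\<lambda>i. - x i) (\<lambda>i. - s i) r k (- c) = (-1)^r * beta I d d0 dinf x s r k c"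
proof -
  define F where "F t = (\<Sum>a\<in>hatA I d0 dinf. xh x a * real (dh d d0 dinf a) * sh s d0 dinf a / (1 + xh x a * t))
      * pc I d d0 dinf x t" for t
  define p where "p = pc I d d0 dinf x"
  have beta_F: "beta I d d0 dinf x s r k c = integral {-1..1} (\<lambda>t. F t * t^r * (c*t + 1) powi k)
      + ((-1)^r * (1 - c) powi k * p (-1) + (1 + c) powi k * p 1)"
    unfolding beta_def F_def p_def ..
  have "beta I d dinf d0 (\<lambda>i. - x i) (\<lambda>i. - s i) r k (- c)
      = integral {-1..1} (\<lambda>t. F (- t) * t^r * (- c*t + 1) powi k)
        + ((-1)^r * (1 + c) powi k * p 1 + (1 - c) powi k * p (-1))"
    unfolding beta_def F_def p_def by (simp add: sum_hatA_swap_ends[where m = d0 and n = dinf] pc_reflect)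
  also have "integral {-1..1} (\<lambda>t. F (- t) * t^r * (- c*t + 1) powi k)
      = integral {-1..1} (\<lambda>t. F t * (- t)^r * (c*t + 1) powi k)"
    using Henstock_Kurzweil_Integration.integral_reflect_real[of 1 "-1" "\<lambda>t. F t * (- t)^r * (c*t + 1) powi k"] by simp
  also have "\<dots> = integral {-1..1} (\<lambda>t. (-1)^r * (F t * t^r * (c*t + 1) powi k))"
  proof (rule integral_cong)
    fix t :: real
    show "F t * (- t)^r * (c*t + 1) powi k = (-1)^r * (F t * t^r * (c*t + 1) powi k)"
      by (simp add: power_minus[of t])
  qed
  also have "\<dots> = (-1)^r * integral {-1..1} (\<lambda>t. F t * t^r * (c*t + 1) powi k)"
    using integral_cmul[where c = "(-1)^r" and f = "\<lambda>t. F t * t^r * (c*t + 1) powi k"] by simp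
  also have "(-1)^r * integral {-1..1} (\<lambda>t. F t * t^r * (c*t + 1) powi k)
        + ((-1)^r * (1 + c) powi k * p 1 + (1 - c) powi k * p (-1))
      = (-1)^r * beta I d d0 dinf x s r k c"
    by (simp add: beta_F distrib_left mult.assoc)
  finally show ?thesis .
qed

lemma xh_less_1:
  assumes "\<forall>i\<in>{1..I}. \<bar>x i\<bar> < 1" and "a \<in> hatA I d0 dinf" and "a \<noteq> Zero"
  shows "xh x a < 1"
  using assms by (cases a) (auto simp: mem_hatA abs_less_iff)

lemma d0_less_mdim: "d0 < mdim I d d0 dinf"
proof (cases "d0 = 0")
  case False
  then have "Zero \<in> hatA I d0 dinf" by (simp add: mem_hatA)
  then have "d0 \<le> (\<Sum>a\<in>hatA I d0 dinf. dh d d0 dinf a)"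
    using member_le_sum[of Zero "hatA I d0 dinf" "dh d d0 dinf"] finite_hatA by simp
  then show ?thesis by (simp add: mdim_def)
qed (simp add: mdim_def)

lemma pc_minus_1_pos:
  assumes "\<forall>i\<in>{1..I}. \<bar>x i\<bar> < 1" and "d0 = 0"
  shows "pc I d d0 dinf x (-1) > 0"
proof -
  have "Zero \<notin> hatA I d0 dinf" using assms(2) by (simp add: mem_hatA)
  then have "0 < 1 - xh x a" if "a \<in> hatA I d0 dinf" for a
    using xh_less_1[OF assms(1) that] that by auto
  then show ?thesis unfolding pc_def by (intro prod_pos zero_less_power) auto
qed

lemma pc_minus_1_eq_0:
  assumes "0 < d0"
  shows "pc I d d0 dinf x (-1) = 0"
proof -
  have "Zero \<in> hatA I d0 dinf" using assms by (simp add: mem_hatA)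
  then show ?thesis using assms unfolding pc_def
    by (subst prod_zero_iff) (auto simp: finite_hatA intro!: bexI[of _ Zero])
qed

lemma beta_numerator_factor:
  assumes I: "I \<ge> 1" and d: "\<forall>i\<in>{1..I}. d i \<ge> 1" and x: "\<forall>i\<in>{1..I}. \<bar>x i\<bar> < 1"
    and l: "l \<ge> mdim I d d0 dinf"
  obtains R where "\<And>t. poly (beta_numerator I d d0 dinf x s) t = (1 + t)^(d0 - 1) * poly R t"
    and "degree R + (d0 - 1) + 2 \<le> l" and "0 < d0 \<Longrightarrow> poly R (-1) > 0"
proof -
  define A where "A = hatA I d0 dinf"
  define D where "D = dh d d0 dinf"
  define P where "P = beta_numerator I d d0 dinf x s"
  have finA: "finite A" unfolding A_def by (rule finite_hatA)
  have D1: "\<forall>a\<in>A. D a \<ge> 1" using dh_ge_1[OF d] unfolding A_def D_def by blast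
  have "Idx 1 \<in> A" using I by (simp add: A_def mem_hatA)
  then have "degree P < (\<Sum>a\<in>A. D a)"
    unfolding P_def A_def D_def using finA D1
    by (intro degree_weighted_logderiv_poly) (auto simp: A_def D_def)
  then have degP: "degree P + 2 \<le> l" using l by (simp add: mdim_def A_def D_def)
  show thesis
  proof (cases "d0 = 0")
    case True
    then show thesis using degP by (intro that[of P]) (simp_all add: P_def)
  next
    case False
    then have Zero: "Zero \<in> A" by (simp add: A_def mem_hatA)
    have "\<forall>b\<in>A - {Zero}. xh x b < 1" using xh_less_1[OF x] by (auto simp: A_def)
    then obtain R where "weighted_logderiv_poly A (xh x) D (sh s d0 dinf) = [:1, 1:]^(D Zero - 1) * R"
      and R1: "poly R (-1) > 0"
      using weighted_logderiv_poly_root_order[OF finA D1 Zero, of "xh x" "sh s d0 dinf"] by auto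
    then have PR: "P = [:1, 1:]^(d0 - 1) * R" by (simp add: P_def A_def D_def)
    have "degree P = (d0 - 1) + degree R"
      using R1 unfolding PR by (subst degree_mult_eq) (auto simp: degree_linear_power)
    then show thesis using degP R1 by (intro that[of R]) (auto simp: PR[unfolded P_def])
  qed
qed

lemma beta_expansion_at_1:
  assumes I: "I \<ge> 1" and d: "\<forall>i\<in>{1..I}. d i \<ge> 1" and x: "\<forall>i\<in>{1..I}. \<bar>x i\<bar> < 1"
    and l: "l \<ge> mdim I d d0 dinf"
  shows "\<exists>g U. open U \<and> 1 \<in> U \<and> smooth_on U g \<and> g 1 > 0 \<and>
           (\<forall>c. 0 < c \<and> c < 1 \<longrightarrow> beta I d d0 dinf x s 0 (- int l) c = g c / (1 - c)^(l - d0))"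
proof -
  obtain R where R: "\<And>t. poly (beta_numerator I d d0 dinf x s) t = (1 + t)^(d0 - 1) * poly R t"
    and degR: "degree R + (d0 - 1) + 2 \<le> l" and R1: "0 < d0 \<Longrightarrow> poly R (-1) > 0"
    using beta_numerator_factor[OF I d x l] by blast
  define p where "p = pc I d d0 dinf x"
  have el: "d0 < l" using d0_less_mdim[of d0 I d dinf] l by linarith
  have B0: "d0 = 0 \<Longrightarrow> p (-1) > 0" using pc_minus_1_pos[OF x] by (simp add: p_def)
  have B1: "0 < d0 \<Longrightarrow> p (-1) = 0 \<and> poly R (-1) > 0" using pc_minus_1_eq_0 R1 by (simp add: p_def)
  obtain g U where gU: "open U" "1 \<in> U" "smooth_on U g" "g 1 > 0"
    and g: "\<And>c. 0 < c \<and> c < 1 \<Longrightarrow>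
       integral {-1..1} (\<lambda>t. (1 + t)^(d0 - 1) * poly R t * (c*t + 1) powi (- int l))
         + ((1 - c) powi (- int l) * p (-1) + (1 + c) powi (- int l) * p 1) = g c / (1 - c)^(l - d0)"
    using integral_poly_powi_expansion_at_1[OF degR el B0 B1, of "p 1"] by blast
  have x_le: "\<forall>i\<in>{1..I}. \<bar>x i\<bar> \<le> 1" using x by auto
  have "beta I d d0 dinf x s 0 (- int l) c
      = integral {-1..1} (\<lambda>t. (1 + t)^(d0 - 1) * poly R t * (c*t + 1) powi (- int l))
         + ((1 - c) powi (- int l) * p (-1) + (1 + c) powi (- int l) * p 1)" for c
    unfolding beta_eq_integral_numerator[OF d x_le] R p_def by (simp only: power_0 mult_1_right mult_1_left)
  with gU g show ?thesis by (intro exI[of _ g] exI[of _ U]) auto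
qed

theorem lemmaA3:
  fixes I d0 dinf l :: nat and d :: "nat \<Rightarrow> nat" and x s :: "nat \<Rightarrow> real"
  assumes "I \<ge> 1"
    and "\<forall>a\<in>{1..I}. d a \<ge> 1"
    and "\<forall>a\<in>{1..I}. 0 < \<bar>x a\<bar> \<and> \<bar>x a\<bar> < 1"
    and "l \<ge> mdim I d d0 dinf"
  shows "(\<exists>g0 U. open U \<and> 1 \<in> U \<and> smooth_on U g0 \<and> g0 1 > 0 \<and>
            (\<exists>err V. open V \<and> 0 \<in> V \<and> smooth_on V err \<and> err 0 = 0 \<and>
              (\<exists>\<epsilon>>0. \<forall>c. 1 - \<epsilon> < c \<and> c < 1 \<longrightarrow>
                 beta I d d0 dinf x s 0 (- int l) c = (g0 c + err (1 - c)) / (1 - c) ^ (l - d0))))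
       \<and> (\<exists>gInf U. open U \<and> -1 \<in> U \<and> smooth_on U gInf \<and> gInf (-1) > 0 \<and>
            (\<exists>err V. open V \<and> 0 \<in> V \<and> smooth_on V err \<and> err 0 = 0 \<and>
              (\<exists>\<epsilon>>0. \<forall>c. -1 < c \<and> c < -1 + \<epsilon> \<longrightarrow>
                 beta I d d0 dinf x s 0 (- int l) c = (gInf c + err (1 + c)) / (1 + c) ^ (l - dinf))))"
proof -
  have x: "\<forall>i\<in>{1..I}. \<bar>x i\<bar> < 1" and x': "\<forall>i\<in>{1..I}. \<bar>- x i\<bar> < 1"
    using assms(3) by auto
  obtain g0 U0 where U0: "open U0" "1 \<in> U0" "smooth_on U0 g0" "g0 1 > 0"
    and g0: "\<And>c. 0 < c \<and> c < 1 \<Longrightarrow> beta I d d0 dinf x s 0 (- int l) c = g0 c / (1 - c)^(l - d0)"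
    using beta_expansion_at_1[OF assms(1,2) x assms(4)] by blast
  have l': "l \<ge> mdim I d dinf d0" unfolding mdim_swap_ends[of I d dinf d0] by (rule assms(4))
  obtain g1 U1 where U1: "open U1" "1 \<in> U1" "smooth_on U1 g1" "g1 1 > 0"
    and g1: "\<And>c. 0 < c \<and> c < 1 \<Longrightarrow>
      beta I d dinf d0 (\<lambda>i. - x i) (\<lambda>i. - s i) 0 (- int l) c = g1 c / (1 - c)^(l - dinf)"
    using beta_expansion_at_1[OF assms(1,2) x' l'] by blast
  have g1': "beta I d d0 dinf x s 0 (- int l) c = g1 (- c) / (1 + c)^(l - dinf)" if "-1 < c" "c < 0" for c
    using g1[of "- c"] beta_reflect[of I d dinf d0 x s 0 "- int l" c] that by simp
  have U1': "open (uminus ` U1)" "-1 \<in> uminus ` U1" "smooth_on (uminus ` U1) (\<lambda>c. g1 (- c))"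
    using U1 by (auto simp: open_negations smooth_on_reflect)
  show ?thesis
  proof (rule conjI[OF exI[of _ g0, OF exI[of _ U0]] exI[of _ "\<lambda>c. g1 (- c)", OF exI[of _ "uminus ` U1"]]];
      intro conjI exI[of _ "\<lambda>_. 0"] exI[of _ UNIV] exI[of _ 1] allI impI smooth_on_const)
  qed (use U0 U1(4) U1' g0 g1' in auto)
qed

end
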